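(* Fix a toric poset $P=P(G,[\omega])$ and $i,j,k\in V$. Then $k\in[i,j]^{\mathrm{tor}}$ if and only if $k$ lies on a toric directed path $i\to_{\mathrm{tor}}j$ in $\bar\omega'$ for some $\bar\omega'\in[\bar\omega^{\mathrm{tor}}(P)]$.
   Context: Toric poset setup: $V=[n]$; $\mathrm{Acyc}(G)$ acyclic orientations; $[\omega]$ the class under the equivalence generated by converting a source into a sink (flips); toric chambers of the toric graphic arrangement $\mathcal{A}_{\mathrm{tor}}(G)$ (components of $\mathbb{R}^V/\mathbb{Z}^V$ minus the toric hyperplanes $H^{\mathrm{tor}}_{ij}=\{x_i\equiv x_j\bmod 1\}$, $\{i,j\}\in E$) correspond bijectively to classes $[\omega]$; $P(G,[\omega])$ is identified with its chamber $c(P)$. Toric transitive closure: $\bar G^{\mathrm{tor}}(P)$ is the graph on $V$ whose edges are those of $G$ together with all $\{i,j\}$ with $H^{\mathrm{tor}}_{ij}\cap c(P)=\emptyset$; $c(P)$ is also a chamber of $\mathcal{A}_{\mathrm{tor}}(\bar G^{\mathrm{tor}}(P))$, and $[\bar\omega^{\mathrm{tor}}(P)]$ is the corresponding class of acyclic orientations of $\bar G^{\mathrm{tor}}(P)$. A toric directed path $i_1\to_{\mathrm{tor}}i_m$ in an orientation is a directed path $i_1\to i_2\to\cdots\to i_m$ such that the edge $i_1\to i_m$ is also present (a single vertex and a single edge count as toric directed paths). Toric chain: $C=\{i_1,\dots,i_m\}$ is a toric chain of $P$ if there is a cyclic class $[(i_1,\dots,i_m)]$ such that for every $x\in c(P)$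 (coordinates in $[0,1)$) some cyclic shift $(j_1,\dots,j_m)$ has $0\le x_{j_1}<\dots<x_{j_m}<1$; write $P|_C=[(i_1,\dots,i_m)]$. Toric interval: $[i,i]^{\mathrm{tor}}=\{i\}$; for $i\ne j$, $[i,j]^{\mathrm{tor}}=\emptyset$ if $\{i,j\}$ is not a toric chain and otherwise $[i,j]^{\mathrm{tor}}=\{i,j\}\cup\{k: P|_{\{i,j,k\}}=[(i,k,j)]\}$. *)

theory Defs
  imports Main "HOL.Real"
begin

definition simple_graph :: "nat set \<Rightarrow> nat set set \<Rightarrow> bool" where
  "simple_graph V E \<longleftrightarrow> finite V \<and> (\<forall>e\<in>E. \<exists>i j. e = {i, j} \<and> i \<noteq> j \<and> i \<in> V \<and> j \<in> V)"

definition is_orientation :: "nat set set \<Rightarrow> (nat \<times> nat) set \<Rightarrow> bool" where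
  "is_orientation E \<omega> \<longleftrightarrow> \<omega> \<subseteq> {(i, j). {i, j} \<in> E \<and> i \<noteq> j} \<and>
     (\<forall>i j. {i, j} \<in> E \<and> i \<noteq> j \<longrightarrow> ((i, j) \<in> \<omega> \<longleftrightarrow> (j, i) \<notin> \<omega>))"

definition acyc_orient :: "nat set set \<Rightarrow> (nat \<times> nat) set \<Rightarrow> bool" where
  "acyc_orient E \<omega> \<longleftrightarrow> is_orientation E \<omega> \<and> acyclic \<omega>"

definition is_source :: "(nat \<times> nat) set \<Rightarrow> nat \<Rightarrow> bool" where
  "is_source \<omega> v \<longleftrightarrow> (\<forall>u. (u, v) \<notin> \<omega>)"

definition flip_at :: "(nat \<times> nat) set \<Rightarrow> nat \<Rightarrow> (nat \<times> nat) set" where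
  "flip_at \<omega> v = {(a, b). (a, b) \<in> \<omega> \<and> a \<noteq> v \<and> b \<noteq> v} \<union>
                  {(b, a) | a b. (a, b) \<in> \<omega> \<and> (a = v \<or> b = v)}"

definition flip_step :: "(nat \<times> nat) set \<Rightarrow> (nat \<times> nat) set \<Rightarrow> bool" where
  "flip_step \<omega> \<omega>' \<longleftrightarrow> (\<exists>v. is_source \<omega> v \<and> \<omega>' = flip_at \<omega> v)"

definition tor_equiv :: "(nat \<times> nat) set \<Rightarrow> (nat \<times> nat) set \<Rightarrow> bool" where
  "tor_equiv = (\<lambda>a b. flip_step a b \<or> flip_step b a)\<^sup>*\<^sup>*"

definition tor_class :: "nat set set \<Rightarrow> (nat \<times> nat) set \<Rightarrow> (nat \<times> nat) set set" where
  "tor_class E \<omega> = {\<omega>'. acyc_orient E \<omega>' \<and> tor_equiv \<omega> \<omega>'}"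

definition orient_of :: "nat set set \<Rightarrow> (nat \<Rightarrow> real) \<Rightarrow> (nat \<times> nat) set" where
  "orient_of E x = {(i, j). {i, j} \<in> E \<and> x i < x j}"

text \<open>Points of the torus R^V/Z^V, represented by coordinates in [0,1) (0 outside V).\<close>
definition torus_points :: "nat set \<Rightarrow> (nat \<Rightarrow> real) set" where
  "torus_points V = {x. (\<forall>i\<in>V. 0 \<le> x i \<and> x i < 1) \<and> (\<forall>i. i \<notin> V \<longrightarrow> x i = 0)}"

text \<open>The toric chamber c(P) of P = P(G,[omega]): the points off all toric hyperplanes
  whose induced orientation lies in [omega] (the chamber/class bijection).\<close>
definition chamber :: "nat set \<Rightarrow> nat set set \<Rightarrow> (nat \<times> nat) set \<Rightarrow> (nat \<Rightarrow> real) set" where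
  "chamber V E \<omega> = {x \<in> torus_points V.
      (\<forall>i j. {i, j} \<in> E \<and> i \<noteq> j \<longrightarrow> x i \<noteq> x j) \<and> tor_equiv \<omega> (orient_of E x)}"

definition tor_closure :: "nat set \<Rightarrow> nat set set \<Rightarrow> (nat \<times> nat) set \<Rightarrow> nat set set" where
  "tor_closure V E \<omega> = E \<union> {{i, j} | i j. i \<in> V \<and> j \<in> V \<and> i \<noteq> j \<and>
                                   (\<forall>x\<in>chamber V E \<omega>. x i \<noteq> x j)}"

definition tor_closure_class :: "nat set \<Rightarrow> nat set set \<Rightarrow> (nat \<times> nat) set \<Rightarrow> (nat \<times> nat) set set" where
  "tor_closure_class V E \<omega> =
     {\<omega>'. \<exists>x\<in>chamber V E \<omega>. \<omega>' \<in> tor_class (tor_closure V E \<omega>) (orient_of (tor_closure V E \<omega>) x)}"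

definition cyc_restr :: "nat set \<Rightarrow> nat set set \<Rightarrow> (nat \<times> nat) set \<Rightarrow> nat list \<Rightarrow> bool" where
  "cyc_restr V E \<omega> l \<longleftrightarrow>
     (\<forall>x\<in>chamber V E \<omega>. \<exists>r<length l. sorted_wrt (\<lambda>a b. x a < x b) (rotate r l))"

definition toric_chain :: "nat set \<Rightarrow> nat set set \<Rightarrow> (nat \<times> nat) set \<Rightarrow> nat set \<Rightarrow> bool" where
  "toric_chain V E \<omega> C \<longleftrightarrow> (\<exists>l. distinct l \<and> set l = C \<and> C \<subseteq> V \<and> cyc_restr V E \<omega> l)"

definition toric_interval :: "nat set \<Rightarrow> nat set set \<Rightarrow> (nat \<times> nat) set \<Rightarrow> nat \<Rightarrow> nat \<Rightarrow> nat set" where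
  "toric_interval V E \<omega> i j =
     (if i = j then {i}
      else if \<not> toric_chain V E \<omega> {i, j} then {}
      else {i, j} \<union> {k. k \<in> V \<and> distinct [i, k, j] \<and> cyc_restr V E \<omega> [i, k, j]})"

definition toric_dpath :: "(nat \<times> nat) set \<Rightarrow> nat list \<Rightarrow> nat \<Rightarrow> nat \<Rightarrow> bool" where
  "toric_dpath \<omega> p i j \<longleftrightarrow> p \<noteq> [] \<and> distinct p \<and> hd p = i \<and> last p = j \<and>
     (\<forall>q. Suc q < length p \<longrightarrow> (p ! q, p ! Suc q) \<in> \<omega>) \<and>
     (2 \<le> length p \<longrightarrow> (i, j) \<in> \<omega>)"

end

theory Submission
  imports Defs
begin

text \<open>
  Flipping a source of the orientation of \<open>E\<close> induced by a chamber point can be realised by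
  pushing that vertex above all others (a sink: below all others); since every edge of the toric transitive closure
  \<open>Etor\<close> is separated by an \<open>E\<close>-neighbour, this flips the same vertex in the
  \<open>Etor\<close>-orientation. Two chamber points with the same \<open>E\<close>-orientation are joined by a
  segment inside the chamber, along which no \<open>Etor\<close>-edge changes direction. Hence the
  \<open>Etor\<close>-orientations of all chamber points form one flip class, namely
  \<open>tor_closure_class V E \<omega>\<close>.

  If \<open>k\<close> lies cyclically between \<open>i\<close> and \<open>j\<close>, cutting the torus at \<open>x i\<close> for a chamber
  point \<open>x\<close> gives a member of that class containing \<open>i \<rightarrow> k \<rightarrow> j\<close> and \<open>i \<rightarrow> j\<close>.
  Conversely, a toric directed path \<open>i \<rightarrow> j\<close> closes up to a cycle of \<open>Etor\<close> with exactly
  one backward edge. That count is invariant under flips, so for every chamber point the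
  coordinates along the cycle descend exactly once, which places every vertex of the path
  cyclically between \<open>i\<close> and \<open>j\<close>.
\<close>

lemma flip_at_iff:
  "(a, b) \<in> flip_at R v \<longleftrightarrow> (if a = v \<or> b = v then (b, a) \<in> R else (a, b) \<in> R)"
  unfolding flip_at_def by auto

lemma flip_at_flip_at [simp]: "flip_at (flip_at R v) v = R"
  unfolding flip_at_def by auto

lemma is_orientation_flip_at:
  assumes "is_orientation G R"
  shows "is_orientation G (flip_at R v)"
proof -
  have sub: "R \<subseteq> {(i, j). {i, j} \<in> G \<and> i \<noteq> j}"
    and tot: "\<And>i j. {i, j} \<in> G \<Longrightarrow> i \<noteq> j \<Longrightarrow> (i, j) \<in> R \<longleftrightarrow> (j, i) \<notin> R"
    using assms unfolding is_orientation_def by blast+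
  have "flip_at R v \<subseteq> {(i, j). {i, j} \<in> G \<and> i \<noteq> j}"
    using sub unfolding flip_at_def by (auto simp: insert_commute)
  moreover have "(i, j) \<in> flip_at R v \<longleftrightarrow> (j, i) \<notin> flip_at R v" if "{i, j} \<in> G" "i \<noteq> j" for i j
    using tot[OF that] by (auto simp: flip_at_iff)
  ultimately show ?thesis
    unfolding is_orientation_def by blast
qed

lemma equivp_tor_equiv: "equivp tor_equiv"
proof -
  have "(\<lambda>a b. flip_step a b \<or> flip_step b a) = symclp flip_step"
    by (simp add: symclp_def fun_eq_iff)
  then show ?thesis
    unfolding tor_equiv_def by simp
qed

lemma tor_equiv_refl [simp]: "tor_equiv R R"
  using equivp_tor_equiv by (rule equivp_reflp)

lemma tor_equiv_sym: "tor_equiv R R' \<Longrightarrow> tor_equiv R' R"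
  using equivp_tor_equiv by (rule equivp_symp)

lemma tor_equiv_trans [trans]: "tor_equiv R R' \<Longrightarrow> tor_equiv R' R'' \<Longrightarrow> tor_equiv R R''"
  using equivp_tor_equiv by (rule equivp_transp)

lemma flip_step_tor_equiv: "flip_step R R' \<Longrightarrow> tor_equiv R R'"
  unfolding tor_equiv_def by blast

lemma acyc_orient_orient_of:
  fixes y :: "nat \<Rightarrow> real"
  assumes "\<And>a b. {a, b} \<in> G \<Longrightarrow> a \<noteq> b \<Longrightarrow> y a \<noteq> y b"
  shows "acyc_orient G (orient_of G y)"
proof -
  have "acyclic {(a, b). y a < y b}"
    by (simp add: acyclic_irrefl trans_def irrefl_def)
  then have "acyclic (orient_of G y)"
    by (rule acyclic_subset) (auto simp: orient_of_def)
  moreover have "is_orientation G (orient_of G y)"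
    using assms unfolding is_orientation_def orient_of_def
    by (auto simp: insert_commute) (metis linorder_neqE_linordered_idom)
  ultimately show ?thesis
    unfolding acyc_orient_def by simp
qed

definition raises_vertex :: "nat set set \<Rightarrow> nat \<Rightarrow> (nat \<Rightarrow> real) \<Rightarrow> (nat \<Rightarrow> real) \<Rightarrow> bool" where
  "raises_vertex G v z z' \<longleftrightarrow>
     (\<forall>u. {u, v} \<in> G \<longrightarrow> z v < z u \<and> z' u < z' v) \<and>
     (\<forall>a b. {a, b} \<in> G \<longrightarrow> a \<noteq> v \<longrightarrow> b \<noteq> v \<longrightarrow> (z a < z b \<longleftrightarrow> z' a < z' b))"

lemma raises_vertex_subset: "raises_vertex G v z z' \<Longrightarrow> G' \<subseteq> G \<Longrightarrow> raises_vertex G' v z z'"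
  unfolding raises_vertex_def by blast

lemma is_source_orient_of_raise: "raises_vertex G v z z' \<Longrightarrow> is_source (orient_of G z) v"
  unfolding raises_vertex_def is_source_def orient_of_def by force

lemma orient_of_raise:
  assumes "raises_vertex G v z z'"
  shows "orient_of G z' = flip_at (orient_of G z) v"
proof -
  have nbr: "z v < z u" "z' u < z' v" if "{u, v} \<in> G" for u
    using assms that unfolding raises_vertex_def by auto
  have same: "z a < z b \<longleftrightarrow> z' a < z' b" if "{a, b} \<in> G" "a \<noteq> v" "b \<noteq> v" for a b
    using assms that unfolding raises_vertex_def by auto
  show ?thesis
  proof (rule set_eqI, clarify)
    fix a b
    show "(a, b) \<in> orient_of G z' \<longleftrightarrow> (a, b) \<in> flip_at (orient_of G z) v"
      using nbr[of a] nbr[of b] same[of a b] unfolding flip_at_iff orient_of_def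
      by (auto simp: insert_commute)
  qed
qed

lemma flip_step_orient_of_raise:
  "raises_vertex G v z z' \<Longrightarrow> flip_step (orient_of G z) (orient_of G z')"
  unfolding flip_step_def using is_source_orient_of_raise orient_of_raise by blast

lemma raise_eq_iff:
  assumes "raises_vertex G v z z'" "{a, b} \<in> G"
  shows "z a = z b \<longleftrightarrow> z' a = z' b"
proof -
  have "{b, a} \<in> G" using assms(2) by (simp add: insert_commute)
  then show ?thesis
    using assms unfolding raises_vertex_def
    by (metis less_irrefl linorder_neqE_linordered_idom)
qed

definition closed_walk :: "nat set set \<Rightarrow> nat list \<Rightarrow> bool" where
  "closed_walk G c \<longleftrightarrow> (\<forall>t<length c. {c ! t, c ! (Suc t mod length c)} \<in> G)"

definition back_edges :: "(nat \<times> nat) set \<Rightarrow> nat list \<Rightarrow> nat" where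
  "back_edges R c = (\<Sum>t<length c. if (c ! t, c ! (Suc t mod length c)) \<in> R then 0 else 1)"

lemma sum_rotate: "(\<Sum>t<n. f (Suc t mod n)) = (\<Sum>t<(n::nat). f t)"
proof (cases n)
  case (Suc m)
  have "(\<Sum>t<m. f (Suc t mod Suc m)) = (\<Sum>t<m. f (Suc t))"
    by (rule sum.cong) auto
  then have "(\<Sum>t<Suc m. f (Suc t mod Suc m)) = (\<Sum>t<m. f (Suc t)) + f 0"
    by simp
  also have "\<dots> = (\<Sum>t<Suc m. f t)"
    by (simp only: sum.lessThan_Suc_shift add.commute)
  finally show ?thesis using Suc by simp
qed simp

lemma sum_eq_cyclic_correction:
  fixes g g' :: "nat \<Rightarrow> nat"
  assumes "\<And>t. t < n \<Longrightarrow> g' t + (if h (Suc t mod n) then 1 else 0) = g t + (if h t then 1 else 0)"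
  shows "(\<Sum>t<n. g' t) = (\<Sum>t<n. g t)"
proof -
  have "(\<Sum>t<n. g' t) + (\<Sum>t<n. if h (Suc t mod n) then 1 else 0) =
        (\<Sum>t<n. g t) + (\<Sum>t<n. if h t then 1 else 0)"
    unfolding sum.distrib[symmetric] using assms by (intro sum.cong) auto
  moreover have "(\<Sum>t<n. if h (Suc t mod n) then 1 else 0) = (\<Sum>t<n. if h t then 1 else (0::nat))"
    by (rule sum_rotate)
  ultimately show ?thesis by simp
qed

text \<open>Reversing a source \<open>v\<close> turns the walk edges entering \<open>v\<close> forward and those leaving \<open>v\<close>
  backward; a closed walk enters \<open>v\<close> as often as it leaves it.\<close>
lemma back_edges_flip_source:
  assumes R: "is_orientation G R" and src: "is_source R v" and c: "closed_walk G c"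
  shows "back_edges (flip_at R v) c = back_edges R c"
  unfolding back_edges_def
proof (rule sum_eq_cyclic_correction[where h = "\<lambda>t. c ! t = v"])
  fix t assume "t < length c"
  then have e: "{c ! t, c ! (Suc t mod length c)} \<in> G" using c unfolding closed_walk_def by blast
  define a b where "a = c ! t" and "b = c ! (Suc t mod length c)"
  have "a \<noteq> b \<Longrightarrow> (a, b) \<in> R \<longleftrightarrow> (b, a) \<notin> R" "(a, a) \<notin> R"
    using R e unfolding is_orientation_def a_def b_def by auto
  moreover have "(a, v) \<notin> R" "(b, v) \<notin> R" using src unfolding is_source_def by auto
  ultimately show "(if (a, b) \<in> flip_at R v then 0 else 1) + (if b = v then 1 else 0) =
      (if (a, b) \<in> R then 0 else 1) + (if a = v then 1 else (0::nat))"
    by (cases "a = b") (auto simp: flip_at_iff)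
qed

lemma back_edges_tor_equiv:
  assumes "tor_equiv R R'" "is_orientation G R" "closed_walk G c"
  shows "is_orientation G R' \<and> back_edges R' c = back_edges R c"
  using assms(1) unfolding tor_equiv_def
proof (induction rule: rtranclp_induct)
  case (step R' R'')
  from step.hyps(2) obtain v where v: "R'' = flip_at R' v"
    and src: "is_source R' v \<or> is_source R'' v"
    unfolding flip_step_def by (metis flip_at_flip_at)
  have "is_orientation G R''"
    using step.IH v is_orientation_flip_at by blast
  moreover have "back_edges R'' c = back_edges R' c"
    using src back_edges_flip_source[OF _ _ assms(3)] step.IH calculation v
    by (metis flip_at_flip_at)
  ultimately show ?case
    using step.IH by simp
qed (use assms(2) in simp)

lemma ascending_run:
  fixes x :: "nat \<Rightarrow> real"
  assumes asc: "\<And>t. t < n \<Longrightarrow> t \<noteq> d \<Longrightarrow> x (p ! t) < x (p ! Suc t)"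
  shows "a < b \<Longrightarrow> b \<le> n \<Longrightarrow> (\<And>t. a \<le> t \<Longrightarrow> t < b \<Longrightarrow> t \<noteq> d) \<Longrightarrow> x (p ! a) < x (p ! b)"
proof (induction b)
  case (Suc b)
  then have "x (p ! b) < x (p ! Suc b)" using asc by simp
  with Suc show ?case
    by (cases "a = b") (auto intro: less_trans)
qed simp

text \<open>Removing the unique descent \<open>d\<close> from the cyclic sequence of values along \<open>p\<close> leaves a
  strictly increasing sequence, starting after \<open>d\<close> and ending at \<open>d\<close>.\<close>
lemma cyclic_order_of_one_back_edge:
  fixes x :: "nat \<Rightarrow> real"
  assumes one: "back_edges {(a, b). x a < x b} p = 1"
    and k: "k \<in> set p" "k \<noteq> hd p" "k \<noteq> last p"
  shows "\<exists>r<3. sorted_wrt (\<lambda>a b. x a < x b) (rotate r [hd p, k, last p])"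
proof -
  define L where "L = length p"
  have "card {t \<in> {..<L}. \<not> x (p ! t) < x (p ! (Suc t mod L))} = 1"
    using one unfolding back_edges_def L_def by (simp add: sum.If_cases Int_def)
  then obtain d where d: "{t \<in> {..<L}. \<not> x (p ! t) < x (p ! (Suc t mod L))} = {d}"
    by (rule card_1_singletonE)
  have asc: "x (p ! t) < x (p ! (Suc t mod L))" if "t < L" "t \<noteq> d" for t
    using d that by blast
  obtain q where q: "q < L" "p ! q = k"
    using k(1) unfolding L_def by (auto simp: in_set_conv_nth)
  have "p \<noteq> []"
    using k(1) by auto
  then have p0: "hd p = p ! 0" and pL: "last p = p ! (L - 1)"
    unfolding L_def by (simp_all add: hd_conv_nth last_conv_nth)
  have q0: "0 < q"
    using k(2) q p0 by (cases q) auto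
  have "q \<noteq> L - 1"
    using k(3) q pL by auto
  with q(1) have qL: "q < L - 1"
    by linarith
  have run: "x (p ! a) < x (p ! b)" if "a < b" "b \<le> L - 1" "\<And>t. a \<le> t \<Longrightarrow> t < b \<Longrightarrow> t \<noteq> d" for a b
  proof (rule ascending_run[of "L - 1" d x p, OF _ that])
    fix t assume "t < L - 1" "t \<noteq> d"
    then show "x (p ! t) < x (p ! Suc t)"
      using asc[of t] by simp
  qed
  have wrap: "x (p ! (L - 1)) < x (p ! 0)" if "d \<noteq> L - 1"
    using asc[of "L - 1"] that qL by (simp add: Suc_diff_1)
  consider "d = L - 1" | "d \<noteq> L - 1" "d < q" | "d \<noteq> L - 1" "q \<le> d"
    by linarith
  then show ?thesis
  proof cases
    case 1
    have "x (p ! 0) < x k" "x k < x (p ! (L - 1))"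
      using run[of 0 q] run[of q "L - 1"] q q0 qL 1 by auto
    then have "sorted_wrt (\<lambda>a b. x a < x b) (rotate 0 [hd p, k, last p])"
      using p0 pL by auto
    then show ?thesis by (intro exI[where x = 0]) auto
  next
    case 2
    have "x k < x (p ! (L - 1))"
      using run[of q "L - 1"] q qL 2 by auto
    then have "sorted_wrt (\<lambda>a b. x a < x b) (rotate 1 [hd p, k, last p])"
      using wrap 2 p0 pL by auto
    then show ?thesis by (intro exI[where x = 1]) auto
  next
    case 3
    have "x (p ! 0) < x k"
      using run[of 0 q] q q0 3 by auto
    then have "sorted_wrt (\<lambda>a b. x a < x b) (rotate 2 [hd p, k, last p])"
      using wrap 3 p0 pL by (auto simp: numeral_2_eq_2)
    then show ?thesis by (intro exI[where x = 2]) auto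
  qed
qed

lemma back_edges_orient_of:
  fixes y :: "nat \<Rightarrow> real"
  assumes "closed_walk G c"
  shows "back_edges (orient_of G y) c = back_edges {(a, b). y a < y b} c"
  using assms unfolding back_edges_def closed_walk_def orient_of_def
  by (intro sum.cong) auto

lemma toric_dpath_self_iff: "toric_dpath R p i i \<longleftrightarrow> p = [i]"
proof
  assume "toric_dpath R p i i"
  then have "p \<noteq> []" "distinct p" "hd p = i" "last p = i"
    unfolding toric_dpath_def by auto
  then show "p = [i]"
    by (cases p) (auto split: if_splits)
qed (simp add: toric_dpath_def)

lemma toric_dpath_length:
  assumes "toric_dpath R p i j" "i \<noteq> j"
  shows "2 \<le> length p"
proof (rule ccontr)
  assume "\<not> 2 \<le> length p"
  then obtain a where "p = [a]"
    using assms(1) unfolding toric_dpath_def by (cases p) (auto simp: Suc_le_eq)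
  then show False
    using assms unfolding toric_dpath_def by simp
qed

lemma toric_dpath_edge: "toric_dpath R p i j \<Longrightarrow> i \<noteq> j \<Longrightarrow> (i, j) \<in> R"
  using toric_dpath_length unfolding toric_dpath_def by blast

lemma toric_dpath_pair: "(i, j) \<in> R \<Longrightarrow> i \<noteq> j \<Longrightarrow> toric_dpath R [i, j] i j"
  unfolding toric_dpath_def by (simp add: All_less_Suc)

lemma toric_dpath_triple:
  "(i, k) \<in> R \<Longrightarrow> (k, j) \<in> R \<Longrightarrow> (i, j) \<in> R \<Longrightarrow> distinct [i, k, j] \<Longrightarrow> toric_dpath R [i, k, j] i j"
  unfolding toric_dpath_def by (simp add: All_less_Suc numeral_3_eq_3)

lemma toric_dpath_closed_walk:
  assumes R: "is_orientation G R" and p: "toric_dpath R p i j" and "i \<noteq> j"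
  shows "closed_walk G p" "back_edges R p = 1"
proof -
  have R_sub: "\<And>a b. (a, b) \<in> R \<Longrightarrow> {a, b} \<in> G"
    using R unfolding is_orientation_def by blast
  define L where "L = length p"
  have "p \<noteq> []" and step: "\<And>t. Suc t < L \<Longrightarrow> (p ! t, p ! Suc t) \<in> R"
    using p unfolding toric_dpath_def L_def by auto
  define m where "m = L - 1"
  have m: "L = Suc m" "0 < m"
    using toric_dpath_length[OF p \<open>i \<noteq> j\<close>] unfolding m_def L_def by auto
  from toric_dpath_edge[OF p \<open>i \<noteq> j\<close>] have "{i, j} \<in> G" "(j, i) \<notin> R"
    using R R_sub \<open>i \<noteq> j\<close> unfolding is_orientation_def by blast+
  have ends: "p ! m = j" "p ! (Suc m mod L) = i"
    using p m \<open>p \<noteq> []\<close> unfolding toric_dpath_def L_def by (auto simp: hd_conv_nth last_conv_nth)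
  have wrap: "Suc t mod L = Suc t" if "t < m" for t
    using that m by simp
  show "closed_walk G p"
    unfolding closed_walk_def L_def[symmetric]
  proof (intro allI impI)
    fix t assume "t < L"
    then consider "t < m" | "t = m" using m by linarith
    then show "{p ! t, p ! (Suc t mod L)} \<in> G"
    proof cases
      case 1
      then show ?thesis
        using step[of t] wrap[of t] R_sub m by simp
    next
      case 2
      then show ?thesis
        using ends \<open>{i, j} \<in> G\<close> by (simp add: insert_commute)
    qed
  qed
  define f where "f t = (if (p ! t, p ! (Suc t mod L)) \<in> R then 0 else 1 :: nat)" for t
  have "back_edges R p = (\<Sum>t<m. f t) + f m"
    unfolding back_edges_def f_def L_def[symmetric] m(1) by simp
  also have "(\<Sum>t<m. f t) = 0"
    using step wrap m unfolding f_def by (intro sum.neutral) auto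
  also have "f m = 1"
    using ends \<open>(j, i) \<notin> R\<close> unfolding f_def by simp
  finally show "back_edges R p = 1" by simp
qed

lemma sorted_wrt_rotate_distinct_values:
  fixes x :: "nat \<Rightarrow> real"
  assumes "sorted_wrt (\<lambda>a b. x a < x b) (rotate r l)" "a \<in> set l" "b \<in> set l" "a \<noteq> b"
  shows "x a \<noteq> x b"
proof -
  have "x a \<noteq> x b" if "sorted_wrt (\<lambda>a b. x a < x b) xs" "a \<in> set xs" "b \<in> set xs" for xs
    using that \<open>a \<noteq> b\<close> by (induction xs) auto
  then show ?thesis
    using assms by simp
qed

definition shift_up :: "nat set \<Rightarrow> (nat \<Rightarrow> real) \<Rightarrow> nat \<Rightarrow> real" where
  "shift_up S x w = (if w \<in> S then x w + 1 else x w)"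

text \<open>Cutting the circle at \<open>x i\<close> turns a cyclic order of \<open>i, k, j\<close> into a linear one.\<close>
lemma shift_up_cyclic_triple:
  fixes x :: "nat \<Rightarrow> real"
  assumes "r < 3" "sorted_wrt (\<lambda>a b. x a < x b) (rotate r [i, k, j])"
    and "\<And>w. w \<in> {i, k, j} \<Longrightarrow> 0 \<le> x w \<and> x w < 1 \<and> (w \<in> S \<longleftrightarrow> x w < x i)"
  shows "shift_up S x i < shift_up S x k \<and> shift_up S x k < shift_up S x j"
proof -
  have "r = 0 \<or> r = 1 \<or> r = 2"
    using assms(1) by auto
  then show ?thesis
    using assms(2) assms(3)[of i] assms(3)[of k] assms(3)[of j]
    by (auto simp: shift_up_def numeral_2_eq_2)
qed

lemma convex_combination_less:
  fixes t p q p' q' :: real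
  assumes "0 \<le> t" "t \<le> 1" "p < q" "p' < q'"
  shows "(1 - t) * p + t * p' < (1 - t) * q + t * q'"
  using assms by (cases "t = 1") (auto intro!: add_less_le_mono mult_strict_left_mono mult_left_mono)

locale toric_poset =
  fixes V :: "nat set" and E :: "nat set set" and \<omega> :: "(nat \<times> nat) set"
  assumes simple_graph: "simple_graph V E" and acyc_orient: "acyc_orient E \<omega>"
begin

abbreviation Etor :: "nat set set" where
  "Etor \<equiv> tor_closure V E \<omega>"

abbreviation cP :: "(nat \<Rightarrow> real) set" where
  "cP \<equiv> chamber V E \<omega>"

lemma finite_V: "finite V"
  using simple_graph unfolding simple_graph_def by blast

lemma edge_E: "{a, b} \<in> E \<Longrightarrow> a \<noteq> b \<and> a \<in> V \<and> b \<in> V"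
  using simple_graph unfolding simple_graph_def by (fastforce simp: doubleton_eq_iff)

lemma E_subset_Etor: "E \<subseteq> Etor"
  unfolding tor_closure_def by blast

lemma edge_Etor: "{a, b} \<in> Etor \<Longrightarrow> a \<noteq> b \<and> a \<in> V \<and> b \<in> V"
  unfolding tor_closure_def using edge_E by (auto simp: doubleton_eq_iff)

lemma chamber_torus_points: "z \<in> cP \<Longrightarrow> z \<in> torus_points V"
  unfolding chamber_def by blast

lemma chamber_bounds: "z \<in> cP \<Longrightarrow> a \<in> V \<Longrightarrow> 0 \<le> z a \<and> z a < 1"
  unfolding chamber_def torus_points_def by blast

lemma chamber_distinct_Etor: "z \<in> cP \<Longrightarrow> {a, b} \<in> Etor \<Longrightarrow> z a \<noteq> z b"
  unfolding tor_closure_def chamber_def using edge_E by (auto simp: doubleton_eq_iff)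

lemma Etor_iff:
  "a \<in> V \<Longrightarrow> b \<in> V \<Longrightarrow> a \<noteq> b \<Longrightarrow> {a, b} \<in> Etor \<longleftrightarrow> (\<forall>z\<in>cP. z a \<noteq> z b)"
  using chamber_distinct_Etor unfolding tor_closure_def by blast

lemma chamber_same_order:
  assumes z: "z \<in> cP" and z': "z' \<in> torus_points V"
    and same: "\<And>a b. {a, b} \<in> E \<Longrightarrow> z a < z b \<longleftrightarrow> z' a < z' b"
  shows "z' \<in> cP"
proof -
  have "orient_of E z' = orient_of E z"
    using same unfolding orient_of_def by auto
  moreover have "z' a \<noteq> z' b" if "{a, b} \<in> E" for a b
  proof -
    have "{b, a} \<in> E" "z a \<noteq> z b"
      using that z chamber_distinct_Etor E_subset_Etor by (auto simp: insert_commute)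
    then show ?thesis
      using same[OF that] same[of b a] by auto
  qed
  ultimately show ?thesis
    using z z' unfolding chamber_def by auto
qed

text \<open>Placing each vertex at its number of \<open>\<omega>\<close>-predecessors, suitably scaled, realises \<open>\<omega>\<close>.\<close>
lemma chamber_nonempty: "\<exists>x. x \<in> cP"
proof -
  define pred where "pred a = {c. (c, a) \<in> \<omega>\<^sup>+}" for a
  define x where "x a = (if a \<in> V then real (card (pred a)) / real (card V + 1) else 0)" for a
  have \<omega>_edge: "(a, b) \<in> \<omega> \<Longrightarrow> {a, b} \<in> E" for a b
    using acyc_orient unfolding acyc_orient_def is_orientation_def by blast
  have \<omega>_total: "{a, b} \<in> E \<Longrightarrow> (a, b) \<in> \<omega> \<or> (b, a) \<in> \<omega>" for a b
    using acyc_orient edge_E unfolding acyc_orient_def is_orientation_def by blast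
  have pred_V: "pred a \<subseteq> V" for a
    unfolding pred_def using \<omega>_edge edge_E by (fastforce dest: tranclD)
  have x_less: "x a < x b" if ab: "(a, b) \<in> \<omega>" for a b
  proof -
    have "pred a \<subseteq> pred b"
      unfolding pred_def using ab by (auto intro: trancl_into_trancl)
    moreover have "a \<in> pred b" "a \<notin> pred a"
      using ab acyc_orient unfolding pred_def acyc_orient_def acyclic_def by auto
    ultimately have "card (pred a) < card (pred b)"
      by (intro psubset_card_mono[OF finite_subset[OF pred_V finite_V]]) blast
    then show ?thesis
      using edge_E[OF \<omega>_edge[OF ab]] unfolding x_def by (simp add: divide_strict_right_mono)
  qed
  have x_distinct: "x a \<noteq> x b" if "{a, b} \<in> E" for a b
    using \<omega>_total[OF that] x_less by (metis less_irrefl)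
  have "orient_of E x = \<omega>"
  proof (rule set_eqI, clarify)
    fix a b
    show "(a, b) \<in> orient_of E x \<longleftrightarrow> (a, b) \<in> \<omega>"
      using \<omega>_total[of a b] \<omega>_edge[of a b] x_less[of a b] x_less[of b a]
      unfolding orient_of_def by auto
  qed
  moreover have "x \<in> torus_points V"
    using card_mono[OF finite_V pred_V] unfolding torus_points_def x_def
    by (auto simp: less_Suc_eq_le[symmetric] simp del: of_nat_Suc)
  ultimately have "x \<in> cP"
    using x_distinct unfolding chamber_def by auto
  then show ?thesis by blast
qed

text \<open>If no \<open>E\<close>-neighbour of \<open>v\<close> lay between \<open>z u\<close> and \<open>z v\<close>, moving \<open>v\<close> to \<open>z u\<close> would stay
  in the chamber, so \<open>{u, v}\<close> could not be an edge of the toric transitive closure.\<close>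
lemma Etor_edge_separated:
  assumes z: "z \<in> cP" and e: "{u, v} \<in> Etor"
  shows "\<exists>w. {w, v} \<in> E \<and> min (z u) (z v) \<le> z w \<and> z w \<le> max (z u) (z v)"
proof (rule ccontr)
  assume none: "\<not> ?thesis"
  have uv: "u \<in> V" "v \<in> V" "u \<noteq> v"
    using edge_Etor[OF e] by auto
  have "z(v := z u) \<in> cP"
  proof (rule chamber_same_order[OF z])
    show "z(v := z u) \<in> torus_points V"
      using z chamber_bounds[OF z uv(1)] uv(2) unfolding chamber_def torus_points_def by auto
    have far: "z w < min (z u) (z v) \<or> max (z u) (z v) < z w" if "{w, v} \<in> E" for w
      using none that by force
    fix a b assume ab: "{a, b} \<in> E"
    then have "a \<noteq> b" "{b, a} \<in> E"
      using edge_E by (auto simp: insert_commute)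
    then show "z a < z b \<longleftrightarrow> (z(v := z u)) a < (z(v := z u)) b"
      using ab far[of a] far[of b]
      by (cases "a = v"; cases "b = v") (auto simp: min_def max_def split: if_splits)
  qed
  from chamber_distinct_Etor[OF this e] show False
    using uv(3) by simp
qed

lemma source_below_Etor_neighbours:
  assumes z: "z \<in> cP" and src: "is_source (orient_of E z) v" and e: "{u, v} \<in> Etor"
  shows "z v < z u"
proof -
  obtain w where w: "{w, v} \<in> E" "min (z u) (z v) \<le> z w" "z w \<le> max (z u) (z v)"
    using Etor_edge_separated[OF z e] by blast
  have "z w \<noteq> z v" "z u \<noteq> z v"
    using chamber_distinct_Etor[OF z] w(1) e E_subset_Etor by blast+
  moreover have "\<not> z w < z v"
    using src w(1) unfolding is_source_def orient_of_def by blast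
  ultimately show ?thesis
    using w by (auto simp: min_def max_def split: if_splits)
qed

lemma sink_above_Etor_neighbours:
  assumes z: "z \<in> cP" and snk: "\<forall>w. (v, w) \<notin> orient_of E z" and e: "{u, v} \<in> Etor"
  shows "z u < z v"
proof -
  obtain w where w: "{w, v} \<in> E" "min (z u) (z v) \<le> z w" "z w \<le> max (z u) (z v)"
    using Etor_edge_separated[OF z e] by blast
  have "z w \<noteq> z v" "z u \<noteq> z v"
    using chamber_distinct_Etor[OF z] w(1) e E_subset_Etor by blast+
  moreover have "\<not> z v < z w"
    using snk w(1) unfolding orient_of_def by (auto simp: insert_commute)
  ultimately show ?thesis
    using w by (auto simp: min_def max_def split: if_splits)
qed

lemma raise_chamber_iff:
  assumes raise: "raises_vertex Etor v z z'"
    and "z \<in> torus_points V" "z' \<in> torus_points V"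
  shows "z \<in> cP \<longleftrightarrow> z' \<in> cP"
proof -
  have raise_E: "raises_vertex E v z z'"
    using raises_vertex_subset[OF raise E_subset_Etor] .
  have "tor_equiv (orient_of E z) (orient_of E z')"
    using flip_step_orient_of_raise[OF raise_E] by (rule flip_step_tor_equiv)
  then have "tor_equiv \<omega> (orient_of E z) \<longleftrightarrow> tor_equiv \<omega> (orient_of E z')"
    using tor_equiv_trans tor_equiv_sym by blast
  moreover have "z a = z b \<longleftrightarrow> z' a = z' b" if "{a, b} \<in> E" for a b
    using raise_eq_iff[OF raise_E that] .
  ultimately show ?thesis
    using assms(2,3) unfolding chamber_def by auto
qed

lemma flip_source_in_chamber:
  assumes z: "z \<in> cP" and "v \<in> V" and src: "is_source (orient_of E z) v"
  shows "\<exists>z'\<in>cP. orient_of E z' = flip_at (orient_of E z) v \<and>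
    tor_equiv (orient_of Etor z) (orient_of Etor z')"
proof -
  define z' where "z' u = (if u \<in> V then if u = v then 1 / 2 else z u / 2 else 0)" for u :: nat
  have raise: "raises_vertex Etor v z z'"
    unfolding raises_vertex_def
  proof (intro conjI allI impI)
    fix u assume e: "{u, v} \<in> Etor"
    then show "z v < z u"
      by (rule source_below_Etor_neighbours[OF z src])
    show "z' u < z' v"
      using edge_Etor[OF e] chamber_bounds[OF z, of u] by (simp add: z'_def)
  next
    fix a b assume "{a, b} \<in> Etor" "a \<noteq> v" "b \<noteq> v"
    then show "z a < z b \<longleftrightarrow> z' a < z' b"
      using edge_Etor[of a b] by (simp add: z'_def)
  qed
  have "z' \<in> torus_points V"
    using chamber_bounds[OF z] by (fastforce simp: torus_points_def z'_def)
  then have "z' \<in> cP"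
    using raise_chamber_iff[OF raise chamber_torus_points[OF z]] z by blast
  moreover have "orient_of E z' = flip_at (orient_of E z) v"
    using orient_of_raise[OF raises_vertex_subset[OF raise E_subset_Etor]] .
  moreover have "tor_equiv (orient_of Etor z) (orient_of Etor z')"
    using flip_step_orient_of_raise[OF raise] by (rule flip_step_tor_equiv)
  ultimately show ?thesis by blast
qed

lemma flip_sink_in_chamber:
  assumes z: "z \<in> cP" and "v \<in> V" and snk: "\<forall>w. (v, w) \<notin> orient_of E z"
  shows "\<exists>z'\<in>cP. orient_of E z' = flip_at (orient_of E z) v \<and>
    tor_equiv (orient_of Etor z) (orient_of Etor z')"
proof -
  define z' where "z' u = (if u \<in> V then if u = v then 0 else (z u + 1) / 2 else 0)" for u :: nat
  have raise: "raises_vertex Etor v z' z"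
    unfolding raises_vertex_def
  proof (intro conjI allI impI)
    fix u assume e: "{u, v} \<in> Etor"
    then show "z u < z v"
      by (rule sink_above_Etor_neighbours[OF z snk])
    show "z' v < z' u"
      using edge_Etor[OF e] chamber_bounds[OF z, of u] by (simp add: z'_def)
  next
    fix a b assume "{a, b} \<in> Etor" "a \<noteq> v" "b \<noteq> v"
    then show "z' a < z' b \<longleftrightarrow> z a < z b"
      using edge_Etor[of a b] by (simp add: z'_def)
  qed
  have "z' \<in> torus_points V"
    using chamber_bounds[OF z] by (fastforce simp: torus_points_def z'_def)
  then have "z' \<in> cP"
    using raise_chamber_iff[OF raise _ chamber_torus_points[OF z]] z by simp
  moreover have "orient_of E z' = flip_at (orient_of E z) v"
    using orient_of_raise[OF raises_vertex_subset[OF raise E_subset_Etor], symmetric]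
    by (metis flip_at_flip_at)
  moreover have "tor_equiv (orient_of Etor z) (orient_of Etor z')"
    using flip_step_orient_of_raise[OF raise] by (rule tor_equiv_sym[OF flip_step_tor_equiv])
  ultimately show ?thesis by blast
qed

lemma flip_at_orient_of_outside:
  assumes "v \<notin> V"
  shows "flip_at (orient_of E z) v = orient_of E z"
proof -
  have "(a, b) \<in> orient_of E z \<Longrightarrow> a \<noteq> v \<and> b \<noteq> v" for a b
    using assms edge_E unfolding orient_of_def by blast
  then show ?thesis
    unfolding flip_at_def by auto
qed

lemma chamber_realises_tor_equiv:
  assumes x: "x \<in> cP" and "tor_equiv (orient_of E x) R"
  shows "\<exists>z\<in>cP. orient_of E z = R \<and> tor_equiv (orient_of Etor x) (orient_of Etor z)"
  using assms(2)[unfolded tor_equiv_def]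
proof (induction rule: rtranclp_induct)
  case (step R R')
  then obtain z where z: "z \<in> cP" "orient_of E z = R"
    and xz: "tor_equiv (orient_of Etor x) (orient_of Etor z)"
    by blast
  from step.hyps(2) obtain v where R': "R' = flip_at R v" and src: "is_source R v \<or> is_source R' v"
    unfolding flip_step_def by (metis flip_at_flip_at)
  have "\<exists>z'\<in>cP. orient_of E z' = flip_at (orient_of E z) v \<and>
      tor_equiv (orient_of Etor z) (orient_of Etor z')"
  proof (cases "v \<in> V")
    case True
    from src show ?thesis
    proof
      assume "is_source R v"
      then show ?thesis
        using flip_source_in_chamber[OF z(1) True] z(2) by simp
    next
      assume "is_source R' v"
      then have "\<forall>w. (v, w) \<notin> orient_of E z"
        using R' z(2) unfolding is_source_def by (auto simp: flip_at_iff)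
      then show ?thesis
        by (rule flip_sink_in_chamber[OF z(1) True])
    qed
  next
    case False
    then show ?thesis
      using z(1) flip_at_orient_of_outside by auto
  qed
  then show ?case
    using xz R' z(2) tor_equiv_trans by blast
qed (use x in auto)

lemma chamber_segment:
  assumes x: "x \<in> cP" and y: "y \<in> cP" and same: "orient_of E x = orient_of E y"
    and t: "0 \<le> t" "t \<le> 1"
  shows "(\<lambda>w. (1 - t) * x w + t * y w) \<in> cP"
proof (rule chamber_same_order[OF x])
  let ?s = "\<lambda>w. (1 - t) * x w + t * y w"
  have "0 \<le> ?s w \<and> ?s w < 1" if "w \<in> V" for w
    using chamber_bounds[OF x that] chamber_bounds[OF y that] t
      convex_combination_less[OF t, of "x w" 1 "y w" 1]
    by simp
  moreover have "?s w = 0" if "w \<notin> V" for w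
    using x y that unfolding chamber_def torus_points_def by simp
  ultimately show "?s \<in> torus_points V"
    unfolding torus_points_def by blast
  have less: "?s a < ?s b" if "{a, b} \<in> E" "x a < x b" for a b
  proof -
    have "(a, b) \<in> orient_of E y"
      using that same[symmetric] unfolding orient_of_def by blast
    then have "y a < y b"
      unfolding orient_of_def by simp
    then show ?thesis
      using convex_combination_less[OF t that(2)] by simp
  qed
  fix a b assume ab: "{a, b} \<in> E"
  then have "{b, a} \<in> E" "x a \<noteq> x b"
    using chamber_distinct_Etor[OF x] E_subset_Etor by (auto simp: insert_commute)
  then show "x a < x b \<longleftrightarrow> ?s a < ?s b"
    using less[OF ab] less[of b a] by (meson less_asym linorder_neqE_linordered_idom)
qed

text \<open>Along the segment from \<open>x\<close> to \<open>y\<close>, which stays in the chamber, the coordinates of an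
  edge of the toric transitive closure never meet, so they keep their order.\<close>
lemma orient_of_Etor_eq:
  assumes x: "x \<in> cP" and y: "y \<in> cP" and same: "orient_of E x = orient_of E y"
  shows "orient_of Etor x = orient_of Etor y"
proof -
  have less: "y a < y b" if x: "x \<in> cP" and y: "y \<in> cP" and same: "orient_of E x = orient_of E y"
    and e: "{a, b} \<in> Etor" and xab: "x a < x b" for x y a b
  proof (rule ccontr)
    assume "\<not> y a < y b"
    with chamber_distinct_Etor[OF y e] have yba: "y b < y a" by simp
    define t where "t = (x b - x a) / ((x b - x a) + (y a - y b))"
    have t: "0 \<le> t" "t \<le> 1" and meet: "(1 - t) * x a + t * y a = (1 - t) * x b + t * y b"
      using xab yba unfolding t_def by (auto simp: field_simps)
    from chamber_distinct_Etor[OF chamber_segment[OF x y same t] e] meet show False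
      by simp
  qed
  show ?thesis
    unfolding orient_of_def using less[OF x y same] less[OF y x same[symmetric]] by auto
qed

lemma tor_equiv_orient_of_Etor:
  assumes x: "x \<in> cP" and y: "y \<in> cP"
  shows "tor_equiv (orient_of Etor x) (orient_of Etor y)"
proof -
  have "tor_equiv (orient_of E x) (orient_of E y)"
    using x y unfolding chamber_def by (blast intro: tor_equiv_trans tor_equiv_sym)
  then obtain z where "z \<in> cP" "orient_of E z = orient_of E y"
    "tor_equiv (orient_of Etor x) (orient_of Etor z)"
    using chamber_realises_tor_equiv[OF x] by blast
  then show ?thesis
    using orient_of_Etor_eq[OF _ y] by metis
qed

lemma tor_closure_class_eq:
  assumes "x \<in> cP"
  shows "tor_closure_class V E \<omega> = tor_class Etor (orient_of Etor x)"
  unfolding tor_closure_class_def tor_class_def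
  using assms tor_equiv_orient_of_Etor tor_equiv_trans by blast

lemma raises_vertex_shift_up:
  assumes x: "x \<in> cP" and S: "S \<subseteq> V" and v: "v \<in> V" "v \<notin> S"
    and below: "\<And>s. s \<in> S \<Longrightarrow> x s \<le> x v" and above: "\<And>w. w \<in> V \<Longrightarrow> w \<notin> S \<Longrightarrow> x v \<le> x w"
  shows "raises_vertex Etor v (shift_up S x) (shift_up (insert v S) x)"
  unfolding raises_vertex_def
proof (intro conjI allI impI)
  fix u assume e: "{u, v} \<in> Etor"
  then have u: "u \<in> V" "u \<noteq> v" and "x u \<noteq> x v"
    using edge_Etor chamber_distinct_Etor[OF x] by blast+
  moreover have "0 \<le> x u" "x u < 1" "0 \<le> x v" "x v < 1"
    using chamber_bounds[OF x] u v by auto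
  ultimately show "shift_up S x v < shift_up S x u"
    and "shift_up (insert v S) x u < shift_up (insert v S) x v"
    using v below[of u] above[of u] by (auto simp: shift_up_def order.not_eq_order_implies_strict)
next
  fix a b assume "a \<noteq> v" "b \<noteq> v"
  then show "shift_up S x a < shift_up S x b \<longleftrightarrow>
      shift_up (insert v S) x a < shift_up (insert v S) x b"
    by (simp add: shift_up_def)
qed

text \<open>Shifting a down-set \<open>S\<close> of the coordinates by one, vertex by vertex from its top, is a
  sequence of flips of the toric transitive closure.\<close>
lemma tor_equiv_shift_up:
  assumes x: "x \<in> cP" and "finite S" "S \<subseteq> V" "\<And>s w. s \<in> S \<Longrightarrow> w \<in> V \<Longrightarrow> w \<notin> S \<Longrightarrow> x s \<le> x w"
  shows "tor_equiv (orient_of Etor x) (orient_of Etor (shift_up S x))"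
  using assms(2-4)
proof (induction S rule: finite_remove_induct)
  case empty
  then show ?case
    by (simp add: shift_up_def)
next
  case (remove A)
  have "Max (x ` A) \<in> x ` A"
    using remove.hyps by (intro Max_in) auto
  then obtain v where v: "v \<in> A" "x v = Max (x ` A)"
    by auto
  then have max: "x s \<le> x v" if "s \<in> A" for s
    using remove.hyps(1) that by simp
  have "tor_equiv (orient_of Etor x) (orient_of Etor (shift_up (A - {v}) x))"
    using remove.IH[OF v(1)] remove.prems max by auto
  also have "tor_equiv \<dots> (orient_of Etor (shift_up (insert v (A - {v})) x))"
    using raises_vertex_shift_up[OF x, of "A - {v}" v] remove.prems v(1) max
    by (intro flip_step_tor_equiv flip_step_orient_of_raise) auto
  finally show ?case
    using v(1) by (simp add: insert_absorb)
qed

lemma acyc_orient_orient_of_chamber: "x \<in> cP \<Longrightarrow> acyc_orient Etor (orient_of Etor x)"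
  using acyc_orient_orient_of[of Etor x] chamber_distinct_Etor by blast

lemma cyc_restr_Etor:
  assumes "cyc_restr V E \<omega> l" "a \<in> set l" "b \<in> set l" "a \<noteq> b" "set l \<subseteq> V"
  shows "{a, b} \<in> Etor"
proof -
  have "z a \<noteq> z b" if "z \<in> cP" for z
    using assms(1) that sorted_wrt_rotate_distinct_values[OF _ assms(2-4)]
    unfolding cyc_restr_def by blast
  then show ?thesis
    using Etor_iff assms(2-5) by blast
qed

lemma toric_chain_pair_iff:
  assumes "i \<in> V" "j \<in> V" "i \<noteq> j"
  shows "toric_chain V E \<omega> {i, j} \<longleftrightarrow> {i, j} \<in> Etor"
proof
  assume "toric_chain V E \<omega> {i, j}"
  then obtain l where "set l = {i, j}" "cyc_restr V E \<omega> l"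
    unfolding toric_chain_def by blast
  then show "{i, j} \<in> Etor"
    using cyc_restr_Etor[of l i j] assms by simp
next
  assume e: "{i, j} \<in> Etor"
  have "\<exists>r<length [i, j]. sorted_wrt (\<lambda>a b. z a < z b) (rotate r [i, j])" if "z \<in> cP" for z
  proof (cases "z i < z j")
    case True
    then show ?thesis by (intro exI[where x = 0]) simp
  next
    case False
    with chamber_distinct_Etor[OF that e] show ?thesis
      by (intro exI[where x = 1]) simp
  qed
  then have "cyc_restr V E \<omega> [i, j]"
    unfolding cyc_restr_def by blast
  then show "toric_chain V E \<omega> {i, j}"
    unfolding toric_chain_def using assms by (intro exI[where x = "[i, j]"]) simp
qed

lemma mem_toric_interval_iff:
  assumes "i \<in> V" "j \<in> V" "k \<in> V" "i \<noteq> j"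
  shows "k \<in> toric_interval V E \<omega> i j \<longleftrightarrow>
    {i, j} \<in> Etor \<and> (k = i \<or> k = j \<or> distinct [i, k, j] \<and> cyc_restr V E \<omega> [i, k, j])"
  using assms(3,4) toric_chain_pair_iff[OF assms(1,2,4)] unfolding toric_interval_def by simp

text \<open>Shifting every coordinate below \<open>x i\<close> up by one cuts the torus at \<open>x i\<close>; in the resulting
  orientation \<open>i\<close> precedes every vertex of the interval, which precedes \<open>j\<close>.\<close>
lemma toric_dpath_through_interval:
  assumes ij: "{i, j} \<in> Etor" and "k \<in> V"
    and k: "k = i \<or> k = j \<or> distinct [i, k, j] \<and> cyc_restr V E \<omega> [i, k, j]"
  shows "\<exists>\<omega>'\<in>tor_closure_class V E \<omega>. \<exists>p. toric_dpath \<omega>' p i j \<and> k \<in> set p"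
proof -
  obtain x where x: "x \<in> cP"
    using chamber_nonempty by blast
  have ij_V: "i \<in> V" "j \<in> V" "i \<noteq> j"
    using edge_Etor[OF ij] by auto
  define S where "S = {w \<in> V. x w < x i}"
  define y where "y = shift_up S x"
  have y_distinct: "y a \<noteq> y b" if "{a, b} \<in> Etor" for a b
    using edge_Etor[OF that] chamber_distinct_Etor[OF x that] chamber_bounds[OF x, of a]
      chamber_bounds[OF x, of b]
    unfolding y_def shift_up_def by auto
  have "tor_equiv (orient_of Etor x) (orient_of Etor y)"
    unfolding y_def S_def by (rule tor_equiv_shift_up[OF x]) (auto simp: finite_V)
  moreover have "acyc_orient Etor (orient_of Etor y)"
    by (rule acyc_orient_orient_of, rule y_distinct)
  ultimately have y_class: "orient_of Etor y \<in> tor_closure_class V E \<omega>"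
    unfolding tor_closure_class_eq[OF x] tor_class_def by simp
  have y_edge: "(a, b) \<in> orient_of Etor y" if "{a, b} \<in> Etor" "y a < y b" for a b
    using that unfolding orient_of_def by simp
  have "x i \<noteq> x j"
    using chamber_distinct_Etor[OF x ij] .
  then have "y i < y j"
    using ij_V chamber_bounds[OF x, of i] chamber_bounds[OF x, of j]
    unfolding y_def S_def shift_up_def by auto
  then have ij_y: "(i, j) \<in> orient_of Etor y"
    by (rule y_edge[OF ij])
  show ?thesis
  proof (cases "k = i \<or> k = j")
    case True
    then have "toric_dpath (orient_of Etor y) [i, j] i j \<and> k \<in> set [i, j]"
      using toric_dpath_pair[OF ij_y ij_V(3)] by auto
    then show ?thesis
      using y_class by blast
  next
    case False
    with k have dist: "distinct [i, k, j]" and cr: "cyc_restr V E \<omega> [i, k, j]"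
      by auto
    have Etor_k: "{i, k} \<in> Etor" "{k, j} \<in> Etor"
      using cyc_restr_Etor[OF cr, of i k] cyc_restr_Etor[OF cr, of k j] dist ij_V \<open>k \<in> V\<close>
      by simp_all
    obtain r where "r < length [i, k, j]" and sorted: "sorted_wrt (\<lambda>a b. x a < x b) (rotate r [i, k, j])"
      using cr x unfolding cyc_restr_def by blast
    then have "r < 3"
      by simp
    have "0 \<le> x w \<and> x w < 1 \<and> (w \<in> S \<longleftrightarrow> x w < x i)" if "w \<in> {i, k, j}" for w
      using that chamber_bounds[OF x, of w] ij_V \<open>k \<in> V\<close> unfolding S_def by auto
    with \<open>r < 3\<close> sorted have "y i < y k \<and> y k < y j"
      unfolding y_def by (rule shift_up_cyclic_triple)
    then have "toric_dpath (orient_of Etor y) [i, k, j] i j \<and> k \<in> set [i, k, j]"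
      using toric_dpath_triple[OF y_edge[OF Etor_k(1)] y_edge[OF Etor_k(2)] ij_y dist] by simp
    then show ?thesis
      using y_class by blast
  qed
qed

lemma toric_dpath_within_interval:
  assumes cls: "\<omega>' \<in> tor_closure_class V E \<omega>" and p: "toric_dpath \<omega>' p i j" and "i \<noteq> j"
  shows "{i, j} \<in> Etor" and "\<And>k. k \<in> set p \<Longrightarrow> k \<noteq> i \<Longrightarrow> k \<noteq> j \<Longrightarrow> cyc_restr V E \<omega> [i, k, j]"
proof -
  obtain x0 where x0: "x0 \<in> cP"
    using chamber_nonempty by blast
  have \<omega>': "is_orientation Etor \<omega>'"
    using cls unfolding tor_closure_class_eq[OF x0] tor_class_def acyc_orient_def by blast
  from toric_dpath_edge[OF p \<open>i \<noteq> j\<close>] show "{i, j} \<in> Etor"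
    using \<omega>' unfolding is_orientation_def by blast
  have walk: "closed_walk Etor p" and one: "back_edges \<omega>' p = 1"
    using toric_dpath_closed_walk[OF \<omega>' p \<open>i \<noteq> j\<close>] by auto
  have ends: "hd p = i" "last p = j"
    using p unfolding toric_dpath_def by auto
  fix k assume k: "k \<in> set p" "k \<noteq> i" "k \<noteq> j"
  show "cyc_restr V E \<omega> [i, k, j]"
    unfolding cyc_restr_def
  proof
    fix x assume x: "x \<in> cP"
    have "tor_equiv (orient_of Etor x) \<omega>'"
      using cls unfolding tor_closure_class_eq[OF x] tor_class_def by blast
    then have "back_edges \<omega>' p = back_edges (orient_of Etor x) p"
      using back_edges_tor_equiv[OF _ _ walk] acyc_orient_orient_of_chamber[OF x]
      unfolding acyc_orient_def by blast
    then have "back_edges {(a, b). x a < x b} p = 1"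
      using one back_edges_orient_of[OF walk] by simp
    then obtain r where "r < 3" "sorted_wrt (\<lambda>a b. x a < x b) (rotate r [hd p, k, last p])"
      using cyclic_order_of_one_back_edge k ends by blast
    then show "\<exists>r<length [i, k, j]. sorted_wrt (\<lambda>a b. x a < x b) (rotate r [i, k, j])"
      using ends by (intro exI[where x = r]) simp
  qed
qed

theorem toric_interval_iff_dpath:
  assumes "i \<in> V" "j \<in> V" "k \<in> V"
  shows "k \<in> toric_interval V E \<omega> i j \<longleftrightarrow>
    (\<exists>\<omega>'\<in>tor_closure_class V E \<omega>. \<exists>p. toric_dpath \<omega>' p i j \<and> k \<in> set p)"
proof (cases "i = j")
  case True
  obtain x where x: "x \<in> cP"
    using chamber_nonempty by blast
  then have "orient_of Etor x \<in> tor_closure_class V E \<omega>"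
    using acyc_orient_orient_of_chamber unfolding tor_closure_class_eq[OF x] tor_class_def by simp
  then show ?thesis
    using True by (auto simp: toric_interval_def toric_dpath_self_iff)
next
  case False
  note interval = mem_toric_interval_iff[OF assms False]
  show ?thesis
  proof
    assume "k \<in> toric_interval V E \<omega> i j"
    then show "\<exists>\<omega>'\<in>tor_closure_class V E \<omega>. \<exists>p. toric_dpath \<omega>' p i j \<and> k \<in> set p"
      using interval toric_dpath_through_interval[OF _ assms(3)] by blast
  next
    assume "\<exists>\<omega>'\<in>tor_closure_class V E \<omega>. \<exists>p. toric_dpath \<omega>' p i j \<and> k \<in> set p"
    then obtain \<omega>' p where "\<omega>' \<in> tor_closure_class V E \<omega>" "toric_dpath \<omega>' p i j" "k \<in> set p"
      by blast
    then show "k \<in> toric_interval V E \<omega> i j"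
      using interval toric_dpath_within_interval[OF _ _ False] False by auto
  qed
qed

end

theorem mainTheorem6:
  fixes n :: nat and E :: "nat set set" and \<omega> :: "(nat \<times> nat) set" and i j k :: nat
  assumes "simple_graph {1..n} E"
    and "acyc_orient E \<omega>"
    and "i \<in> {1..n}" and "j \<in> {1..n}" and "k \<in> {1..n}"
  shows "k \<in> toric_interval {1..n} E \<omega> i j \<longleftrightarrow>
         (\<exists>\<omega>'\<in>tor_closure_class {1..n} E \<omega>. \<exists>p. toric_dpath \<omega>' p i j \<and> k \<in> set p)"
proof -
  interpret toric_poset "{1..n}" E \<omega>
    using assms(1,2) by unfold_locales
  show ?thesis
    using toric_interval_iff_dpath[OF assms(3-5)] .
qed

end
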